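(* There is an injective ring homomorphism $\Delta\colon\Lambda\to\Gamma$ such that the ring embeddings $K\to\Lambda$ and $\Lambda\to\Gamma$ compose to the ring embedding $K\to\Gamma$.
   Context: $K$ is a division ring, $(Q,Z)$ a gentle pair (locally gentle with finitely many admissible paths), $\boldsymbol{\sigma}\colon Q_1\to\operatorname{Aut}(K)$, $a\mapsto\sigma_a$. The semilinear path algebra $K_{\boldsymbol{\sigma}}Q$ is the $K$-ring generated by trivial paths $e_v$ and arrows $a$ subject to $\sum e_v=1$, $e_v^2=e_v$, $e_ue_v=0$ ($u\neq v$), $e_v\lambda=\lambda e_v$, $e_{h(a)}a=a=ae_{t(a)}$, $a\lambda=\sigma_a(\lambda)a$. Let $\Lambda=K_{\boldsymbol{\sigma}}Q/\langle Z\rangle$. Let $Q'=Q^{\mathrm{cut}}(Z)$ be the Zembyk excision (denoted in the paper by $Q$ with a scissors superscript): vertices $v'$ for non-relational $v$ and two distinct vertices $v(\sharp),v(\flat)$ for each relational $v$ (i.e. $v=t(b)=h(a)$ for some $ba\in Z$), arrows $a'$ for $a\in Q_1$, with heads/tails reattached at relational $v$ so that for $h(a)=v=t(b)$, $b'a'$ is a path in $Q'$ exactly when $ba\notin Z$. Let $\Gamma=K_{\boldsymbol{\sigma}'}Q'$ with $\sigma'_{a'}=\sigma_a$. (The map is induced by $e_v\mapsto e_{v'}$ for non-relational $v$, $e_u\mapsto e_{u(\sharp)}+e_{u(\flat)}$ for relational $u$, $a\mapsto a'$.) *)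

theory Defs
  imports "HOL-Algebra.QuotRing"
begin

text \<open>A path is a pair (v, as): as = [a_n, ..., a_1] is the list of arrows of the
path a_n ... a_1 (written right to left, so t(a_(i+1)) = h(a_i)), and v is its
head vertex; the trivial path e_v is (v, []).\<close>

definition qpath :: "'v set \<Rightarrow> 'a set \<Rightarrow> ('a \<Rightarrow> 'v) \<Rightarrow> ('a \<Rightarrow> 'v) \<Rightarrow> 'v \<times> 'a list \<Rightarrow> bool" where
  "qpath V A h t p = (set (snd p) \<subseteq> A \<and>
     (if snd p = [] then fst p \<in> V else fst p = h (hd (snd p))) \<and>
     (\<forall>i. Suc i < length (snd p) \<longrightarrow> t (snd p ! i) = h (snd p ! Suc i)))"

definition ptail :: "('a \<Rightarrow> 'v) \<Rightarrow> 'v \<times> 'a list \<Rightarrow> 'v" where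
  "ptail t p = (if snd p = [] then fst p else t (last (snd p)))"

text \<open>Concatenation pq (first q, then p), defined when ptail p = head of q.\<close>
definition pconcat :: "'v \<times> 'a list \<Rightarrow> 'v \<times> 'a list \<Rightarrow> 'v \<times> 'a list" where
  "pconcat p q = (fst p, snd p @ snd q)"

text \<open>sigma_p = sigma_(a_n) o ... o sigma_(a_1) for p = a_n ... a_1, so that p lambda = sigma_p(lambda) p.\<close>
definition ptwist :: "('a \<Rightarrow> 'k \<Rightarrow> 'k) \<Rightarrow> 'a list \<Rightarrow> 'k \<Rightarrow> 'k" where
  "ptwist \<sigma> as = foldr (\<lambda>a f. \<sigma> a \<circ> f) as id"

text \<open>The semilinear path algebra K_sigma Q: finite left K-linear combinations
sum lambda_p p of paths, with (lambda p)(mu q) = lambda sigma_p(mu) pq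
(and 0 if pq is not a path).\<close>
definition semilinear_path_algebra ::
  "'v set \<Rightarrow> 'a set \<Rightarrow> ('a \<Rightarrow> 'v) \<Rightarrow> ('a \<Rightarrow> 'v) \<Rightarrow> ('a \<Rightarrow> 'k::division_ring \<Rightarrow> 'k)
     \<Rightarrow> ('v \<times> 'a list \<Rightarrow> 'k) ring" where
  "semilinear_path_algebra V A h t \<sigma> =
    \<lparr>carrier = {f. (\<forall>p. f p \<noteq> 0 \<longrightarrow> qpath V A h t p) \<and> finite {p. f p \<noteq> 0}},
     mult = (\<lambda>f g r. \<Sum>(p, q) \<in> {(p, q). qpath V A h t p \<and> qpath V A h t q \<and> f p \<noteq> 0 \<and> g q \<noteq> 0
                                   \<and> ptail t p = fst q \<and> pconcat p q = r}.
                        f p * ptwist \<sigma> (snd p) (g q)),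
     one = (\<lambda>p. if snd p = [] \<and> fst p \<in> V then 1 else 0),
     zero = (\<lambda>p. 0),
     add = (\<lambda>f g p. f p + g p)\<rparr>"

definition scalar_elem :: "'v set \<Rightarrow> 'k::division_ring \<Rightarrow> ('v \<times> 'a list \<Rightarrow> 'k)" where
  "scalar_elem V c = (\<lambda>p. if snd p = [] \<and> fst p \<in> V then c else 0)"

definition path_elem :: "'v \<times> 'a list \<Rightarrow> ('v \<times> 'a list \<Rightarrow> 'k::division_ring)" where
  "path_elem p = (\<lambda>q. if q = p then 1 else 0)"

text \<open>A relation (b, a) \<in> Z stands for the length-two path ba (so h a = t b).\<close>
definition relation_elems :: "('a \<Rightarrow> 'v) \<Rightarrow> ('a \<times> 'a) set \<Rightarrow> ('v \<times> 'a list \<Rightarrow> 'k::division_ring) set" where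
  "relation_elems h Z = {path_elem (h b, [b, a]) | b a. (b, a) \<in> Z}"

definition bound_semilinear_algebra ::
  "'v set \<Rightarrow> 'a set \<Rightarrow> ('a \<Rightarrow> 'v) \<Rightarrow> ('a \<Rightarrow> 'v) \<Rightarrow> ('a \<Rightarrow> 'k::division_ring \<Rightarrow> 'k) \<Rightarrow> ('a \<times> 'a) set
     \<Rightarrow> ('v \<times> 'a list \<Rightarrow> 'k) set ring" where
  "bound_semilinear_algebra V A h t \<sigma> Z =
     semilinear_path_algebra V A h t \<sigma> Quot genideal (semilinear_path_algebra V A h t \<sigma>) (relation_elems h Z)"

definition bound_scalar ::
  "'v set \<Rightarrow> 'a set \<Rightarrow> ('a \<Rightarrow> 'v) \<Rightarrow> ('a \<Rightarrow> 'v) \<Rightarrow> ('a \<Rightarrow> 'k::division_ring \<Rightarrow> 'k) \<Rightarrow> ('a \<times> 'a) set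
     \<Rightarrow> 'k \<Rightarrow> ('v \<times> 'a list \<Rightarrow> 'k) set" where
  "bound_scalar V A h t \<sigma> Z c =
     a_r_coset (semilinear_path_algebra V A h t \<sigma>)
       (genideal (semilinear_path_algebra V A h t \<sigma>) (relation_elems h Z)) (scalar_elem V c)"

definition ring_automorphism :: "('k::division_ring \<Rightarrow> 'k) \<Rightarrow> bool" where
  "ring_automorphism f = (bij f \<and> (\<forall>x y. f (x + y) = f x + f y) \<and> (\<forall>x y. f (x * y) = f x * f y) \<and> f 1 = 1)"

definition at_most_one :: "('b \<Rightarrow> bool) \<Rightarrow> bool" where
  "at_most_one P = (\<forall>x y. P x \<and> P y \<longrightarrow> x = y)"

definition locally_gentle :: "'v set \<Rightarrow> 'a set \<Rightarrow> ('a \<Rightarrow> 'v) \<Rightarrow> ('a \<Rightarrow> 'v) \<Rightarrow> ('a \<times> 'a) set \<Rightarrow> bool" where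
  "locally_gentle V A h t Z =
    ((\<forall>a\<in>A. h a \<in> V \<and> t a \<in> V) \<and>
     (\<forall>v\<in>V. finite {a\<in>A. h a = v} \<and> card {a\<in>A. h a = v} \<le> 2 \<and>
             finite {a\<in>A. t a = v} \<and> card {a\<in>A. t a = v} \<le> 2) \<and>
     Z \<subseteq> {(b, a). a \<in> A \<and> b \<in> A \<and> h a = t b} \<and>
     (\<forall>a\<in>A. at_most_one (\<lambda>b. b \<in> A \<and> t b = h a \<and> (b, a) \<in> Z) \<and>
             at_most_one (\<lambda>b. b \<in> A \<and> t b = h a \<and> (b, a) \<notin> Z)) \<and>
     (\<forall>b\<in>A. at_most_one (\<lambda>a. a \<in> A \<and> t b = h a \<and> (b, a) \<in> Z) \<and>
             at_most_one (\<lambda>a. a \<in> A \<and> t b = h a \<and> (b, a) \<notin> Z)))"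

definition admissible_path :: "'v set \<Rightarrow> 'a set \<Rightarrow> ('a \<Rightarrow> 'v) \<Rightarrow> ('a \<Rightarrow> 'v) \<Rightarrow> ('a \<times> 'a) set \<Rightarrow> 'v \<times> 'a list \<Rightarrow> bool" where
  "admissible_path V A h t Z p = (qpath V A h t p \<and>
     (\<forall>i. Suc i < length (snd p) \<longrightarrow> (snd p ! i, snd p ! Suc i) \<notin> Z))"

definition gentle_pair :: "'v set \<Rightarrow> 'a set \<Rightarrow> ('a \<Rightarrow> 'v) \<Rightarrow> ('a \<Rightarrow> 'v) \<Rightarrow> ('a \<times> 'a) set \<Rightarrow> bool" where
  "gentle_pair V A h t Z = (locally_gentle V A h t Z \<and> finite {p. admissible_path V A h t Z p})"

definition relational :: "('a \<Rightarrow> 'v) \<Rightarrow> ('a \<Rightarrow> 'v) \<Rightarrow> ('a \<times> 'a) set \<Rightarrow> 'v \<Rightarrow> bool" where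
  "relational h t Z v = (\<exists>b a. (b, a) \<in> Z \<and> h a = v \<and> t b = v)"

datatype 'v cut_vertex = Plain 'v | Sharp 'v | Flat 'v

definition cut_vertices :: "'v set \<Rightarrow> ('a \<Rightarrow> 'v) \<Rightarrow> ('a \<Rightarrow> 'v) \<Rightarrow> ('a \<times> 'a) set \<Rightarrow> 'v cut_vertex set" where
  "cut_vertices V h t Z =
     Plain ` {v\<in>V. \<not> relational h t Z v} \<union> Sharp ` {v\<in>V. relational h t Z v} \<union> Flat ` {v\<in>V. relational h t Z v}"

text \<open>h', t' are head/tail maps of the excised quiver (arrow a' is identified with a):
endpoints at non-relational v go to v', endpoints at relational v are reattached to
v(sharp) or v(flat) so that b'a' is a path iff ba \<notin> Z.\<close>
definition is_cut_reattachment ::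
  "'a set \<Rightarrow> ('a \<Rightarrow> 'v) \<Rightarrow> ('a \<Rightarrow> 'v) \<Rightarrow> ('a \<times> 'a) set \<Rightarrow> ('a \<Rightarrow> 'v cut_vertex) \<Rightarrow> ('a \<Rightarrow> 'v cut_vertex) \<Rightarrow> bool" where
  "is_cut_reattachment A h t Z h' t' =
    ((\<forall>a\<in>A. (if relational h t Z (h a) then h' a \<in> {Sharp (h a), Flat (h a)} else h' a = Plain (h a))
          \<and> (if relational h t Z (t a) then t' a \<in> {Sharp (t a), Flat (t a)} else t' a = Plain (t a))) \<and>
     (\<forall>a\<in>A. \<forall>b\<in>A. h a = t b \<and> relational h t Z (h a) \<longrightarrow> (h' a = t' b \<longleftrightarrow> (b, a) \<notin> Z)))"

end

theory Submission
  imports Defs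
begin

text \<open>
  Forgetting the decorations of the vertices of the excised quiver Q' maps its paths onto the
  admissible paths of (Q, Z); a nontrivial admissible path has exactly one preimage, and a trivial
  path e_v has one or two. Composing coefficient functions with this map is a ring homomorphism
  K_\<sigma>Q \<rightarrow> K_\<sigma>Q', because the factorizations of a path of Q' are exactly the lifts of the
  factorizations of its image. Its kernel consists of the elements supported on
  non-admissible paths. Each of these paths contains a relation ba \<in> Z and so lies in \<langle>Z\<rangle>; hence
  the kernel is \<langle>Z\<rangle>, and the homomorphism theorem gives the injective map \<Delta> : \<Lambda> \<rightarrow> \<Gamma>.
\<close>

section \<open>Twisting maps\<close>

lemma ptwist_Nil [simp]: "ptwist \<sigma> [] = id"
  by (simp add: ptwist_def)

lemma ptwist_Cons [simp]: "ptwist \<sigma> (a # as) = \<sigma> a \<circ> ptwist \<sigma> as"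
  by (simp add: ptwist_def)

lemma ptwist_append: "ptwist \<sigma> (xs @ ys) = ptwist \<sigma> xs \<circ> ptwist \<sigma> ys"
  by (induction xs) auto

definition ring_endomorphism :: "('k::ring_1 \<Rightarrow> 'k) \<Rightarrow> bool" where
  "ring_endomorphism f \<longleftrightarrow>
     (\<forall>x y. f (x + y) = f x + f y) \<and> (\<forall>x y. f (x * y) = f x * f y) \<and> f 1 = 1"

lemma ring_endomorphism_add: "ring_endomorphism f \<Longrightarrow> f (x + y) = f x + f y"
  by (simp add: ring_endomorphism_def)

lemma ring_endomorphism_mult: "ring_endomorphism f \<Longrightarrow> f (x * y) = f x * f y"
  by (simp add: ring_endomorphism_def)

lemma ring_endomorphism_one: "ring_endomorphism f \<Longrightarrow> f 1 = 1"
  by (simp add: ring_endomorphism_def)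

lemma ring_endomorphism_zero: "ring_endomorphism f \<Longrightarrow> f 0 = 0"
  using ring_endomorphism_add[of f 0 0] by simp

lemma ring_endomorphism_sum:
  "ring_endomorphism f \<Longrightarrow> f (\<Sum>x\<in>S. g x) = (\<Sum>x\<in>S. f (g x))"
  by (induction S rule: infinite_finite_induct)
    (simp_all add: ring_endomorphism_zero ring_endomorphism_add)

lemma ring_endomorphism_ptwist:
  "(\<And>a. a \<in> set as \<Longrightarrow> ring_endomorphism (\<sigma> a)) \<Longrightarrow> ring_endomorphism (ptwist \<sigma> as)"
  by (induction as) (auto simp: ring_endomorphism_def)

lemma ring_automorphism_imp_endomorphism: "ring_automorphism f \<Longrightarrow> ring_endomorphism f"
  by (simp add: ring_automorphism_def ring_endomorphism_def)

section \<open>Paths and their factorizations\<close>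

lemma not_successively_split:
  "\<not> successively P xs \<Longrightarrow> \<exists>ys a b zs. xs = ys @ a # b # zs \<and> \<not> P a b"
proof (induction P xs rule: successively.induct)
  case (3 P x y xs)
  then show ?case by (metis append_Cons append_Nil successively.simps(3))
qed simp_all

lemma qpath_iff:
  "qpath V A h t (v, as) \<longleftrightarrow>
     set as \<subseteq> A \<and> (if as = [] then v \<in> V else v = h (hd as)) \<and> successively (\<lambda>b a. t b = h a) as"
  by (simp add: qpath_def successively_conv_nth)

lemma admissible_path_iff:
  "admissible_path V A h t Z (v, as) \<longleftrightarrow>
     set as \<subseteq> A \<and> (if as = [] then v \<in> V else v = h (hd as)) \<and>
     successively (\<lambda>b a. t b = h a \<and> (b, a) \<notin> Z) as"
  by (auto simp: admissible_path_def qpath_def successively_conv_nth)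

lemma ptail_Nil [simp]: "ptail t (v, []) = v"
  by (simp add: ptail_def)

lemma ptail_Cons [simp]: "ptail t (v, a # as) = ptail t (t a, as)"
  by (simp add: ptail_def)

lemma ptail_append: "ptail t (v, xs @ ys) = ptail t (ptail t (v, xs), ys)"
  by (induction xs arbitrary: v) auto

text \<open>
  Arrow lists run right to left, so left_factor i r consists of the last i arrows of r
  and right_factor t i r of the others, which are traversed first.
\<close>

definition left_factor :: "nat \<Rightarrow> 'v \<times> 'a list \<Rightarrow> 'v \<times> 'a list" where
  "left_factor i r = (fst r, take i (snd r))"

definition right_factor :: "('a \<Rightarrow> 'v) \<Rightarrow> nat \<Rightarrow> 'v \<times> 'a list \<Rightarrow> 'v \<times> 'a list" where
  "right_factor t i r = (ptail t (left_factor i r), drop i (snd r))"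

lemma fst_right_factor [simp]: "fst (right_factor t i r) = ptail t (left_factor i r)"
  by (simp add: right_factor_def)

lemma pconcat_factors: "pconcat (left_factor i r) (right_factor t i r) = r"
  by (simp add: pconcat_def left_factor_def right_factor_def)

lemma factorizations_eq:
  "{(p, q). ptail t p = fst q \<and> pconcat p q = r} =
     (\<lambda>i. (left_factor i r, right_factor t i r)) ` {..length (snd r)}"
proof (intro equalityI subsetI)
  fix x assume "x \<in> {(p, q). ptail t p = fst q \<and> pconcat p q = r}"
  then obtain p q where x: "x = (p, q)" "ptail t p = fst q" "r = (fst p, snd p @ snd q)"
    by (auto simp: pconcat_def)
  then have "x = (left_factor (length (snd p)) r, right_factor t (length (snd p)) r)"
    by (simp add: left_factor_def right_factor_def prod_eq_iff)
  with x show "x \<in> (\<lambda>i. (left_factor i r, right_factor t i r)) ` {..length (snd r)}"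
    by (intro image_eqI[of _ _ "length (snd p)"]) auto
qed (auto simp: pconcat_factors)

lemma length_left_factor: "i \<le> length (snd r) \<Longrightarrow> length (snd (left_factor i r)) = i"
  by (simp add: left_factor_def)

lemma inj_on_factorization: "inj_on (\<lambda>i. (left_factor i r, right_factor t i r)) {..length (snd r)}"
  by (rule inj_onI) (metis atMost_iff length_left_factor prod.inject)

lemma left_factor_left_factor: "i \<le> j \<Longrightarrow> left_factor i (left_factor j r) = left_factor i r"
  by (simp add: left_factor_def min_absorb1)

lemma right_factor_left_factor:
  "i \<le> j \<Longrightarrow> right_factor t i (left_factor j r) = left_factor (j - i) (right_factor t i r)"
  by (simp add: left_factor_def right_factor_def min_absorb1 take_drop)

lemma right_factor_right_factor: "right_factor t m (right_factor t i r) = right_factor t (i + m) r"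
  by (simp add: left_factor_def right_factor_def take_add ptail_append add.commute)

lemma left_factor_append:
  "snd (left_factor i r) @ snd (left_factor m (right_factor t i r)) = snd (left_factor (i + m) r)"
  by (simp add: left_factor_def right_factor_def take_add)

lemma ptwist_left_factor_right_factor:
  "ptwist \<sigma> (snd (left_factor i r)) (ptwist \<sigma> (snd (left_factor m (right_factor t i r))) x) =
     ptwist \<sigma> (snd (left_factor (i + m) r)) x"
  using ptwist_append[of \<sigma> "snd (left_factor i r)" "snd (left_factor m (right_factor t i r))"]
  by (simp add: left_factor_append)

lemma length_right_factor: "length (snd (right_factor t i r)) = length (snd r) - i"
  by (simp add: right_factor_def)

locale quiver =
  fixes V :: "'v set" and A :: "'a set" and h t :: "'a \<Rightarrow> 'v"
  assumes arrow_ends_in_V: "a \<in> A \<Longrightarrow> h a \<in> V \<and> t a \<in> V"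
begin

abbreviation path :: "'v \<times> 'a list \<Rightarrow> bool" where
  "path \<equiv> qpath V A h t"

lemma path_Nil [simp]: "path (v, []) \<longleftrightarrow> v \<in> V"
  by (simp add: qpath_def)

lemma path_Cons [simp]: "path (v, a # as) \<longleftrightarrow> a \<in> A \<and> v = h a \<and> path (t a, as)"
  by (cases as) (auto simp: qpath_iff successively_Cons arrow_ends_in_V)

lemma path_head_in_V: "path (v, as) \<Longrightarrow> v \<in> V"
  by (cases as) (auto simp: arrow_ends_in_V)

lemma path_append: "path (v, xs @ ys) \<longleftrightarrow> path (v, xs) \<and> path (ptail t (v, xs), ys)"
  by (induction xs arbitrary: v) (auto dest: path_head_in_V)

lemma path_ptail_in_V: "path p \<Longrightarrow> ptail t p \<in> V"
  using path_append[of "fst p" "snd p" "[]"] by simp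

lemma path_left_factor: "path r \<Longrightarrow> path (left_factor i r)"
  using path_append[of "fst r" "take i (snd r)" "drop i (snd r)"] by (simp add: left_factor_def)

lemma path_right_factor: "path r \<Longrightarrow> path (right_factor t i r)"
  using path_append[of "fst r" "take i (snd r)" "drop i (snd r)"]
  by (simp add: left_factor_def right_factor_def)

lemma path_pconcat: "path p \<Longrightarrow> path q \<Longrightarrow> ptail t p = fst q \<Longrightarrow> path (pconcat p q)"
  by (cases p, cases q) (simp add: pconcat_def path_append)

end

section \<open>The semilinear path algebra\<close>

locale semilinear_quiver = quiver V A h t
  for V :: "'v set" and A :: "'a set" and h t :: "'a \<Rightarrow> 'v" +
  fixes \<sigma> :: "'a \<Rightarrow> 'k::division_ring \<Rightarrow> 'k"
  assumes finite_V: "finite V"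
    and automorphic_twists: "a \<in> A \<Longrightarrow> ring_automorphism (\<sigma> a)"
begin

abbreviation R :: "('v \<times> 'a list \<Rightarrow> 'k) ring" where
  "R \<equiv> semilinear_path_algebra V A h t \<sigma>"

lemma ring_endomorphism_path_twist: "path p \<Longrightarrow> ring_endomorphism (ptwist \<sigma> (snd p))"
  by (cases p) (auto simp: qpath_iff
      intro!: ring_endomorphism_ptwist ring_automorphism_imp_endomorphism[OF automorphic_twists])

lemma R_carrier_iff: "f \<in> carrier R \<longleftrightarrow> (\<forall>p. f p \<noteq> 0 \<longrightarrow> path p) \<and> finite {p. f p \<noteq> 0}"
  by (simp add: semilinear_path_algebra_def)

lemma R_carrier_path: "f \<in> carrier R \<Longrightarrow> f p \<noteq> 0 \<Longrightarrow> path p"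
  unfolding R_carrier_iff by blast

lemma R_carrier_finite_support: "f \<in> carrier R \<Longrightarrow> finite {p. f p \<noteq> 0}"
  by (simp add: R_carrier_iff)

lemma R_zero: "\<zero>\<^bsub>R\<^esub> = (\<lambda>p. 0)"
  by (simp add: semilinear_path_algebra_def)

lemma R_one: "\<one>\<^bsub>R\<^esub> = scalar_elem V 1"
  by (simp add: semilinear_path_algebra_def scalar_elem_def)

lemma R_add: "f \<oplus>\<^bsub>R\<^esub> g = (\<lambda>p. f p + g p)"
  by (simp add: semilinear_path_algebra_def)

lemma R_mult: "(f \<otimes>\<^bsub>R\<^esub> g) r =
    (\<Sum>(p, q) \<in> {(p, q). path p \<and> path q \<and> f p \<noteq> 0 \<and> g q \<noteq> 0 \<and> ptail t p = fst q \<and> pconcat p q = r}.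
       f p * ptwist \<sigma> (snd p) (g q))"
  by (simp add: semilinear_path_algebra_def)

lemma R_twisted_zero: "f \<in> carrier R \<Longrightarrow> f (v, as) * ptwist \<sigma> as 0 = 0"
  using R_carrier_path ring_endomorphism_path_twist[of "(v, as)"] ring_endomorphism_zero
  by (cases "f (v, as) = 0") auto

lemma R_mult_eq_factor_sum:
  assumes f: "f \<in> carrier R" and g: "g \<in> carrier R"
  shows "(f \<otimes>\<^bsub>R\<^esub> g) r = (\<Sum>i\<le>length (snd r).
    f (left_factor i r) * ptwist \<sigma> (snd (left_factor i r)) (g (right_factor t i r)))"
proof -
  let ?F = "\<lambda>(p, q). f p * ptwist \<sigma> (snd p) (g q)"
  let ?factorization = "\<lambda>i. (left_factor i r, right_factor t i r)"
  let ?S = "{(p, q). path p \<and> path q \<and> f p \<noteq> 0 \<and> g q \<noteq> 0 \<and> ptail t p = fst q \<and> pconcat p q = r}"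
  have "(f \<otimes>\<^bsub>R\<^esub> g) r = sum ?F ?S"
    by (simp add: R_mult)
  also have "\<dots> = sum ?F (?factorization ` {..length (snd r)})"
  proof (rule sum.mono_neutral_left)
    show "?S \<subseteq> ?factorization ` {..length (snd r)}"
      using factorizations_eq by blast
    show "\<forall>x \<in> ?factorization ` {..length (snd r)} - ?S. ?F x = 0"
    proof
      fix x assume x: "x \<in> ?factorization ` {..length (snd r)} - ?S"
      then obtain i where x_eq: "x = ?factorization i"
        by blast
      have "f (left_factor i r) = 0 \<or> g (right_factor t i r) = 0"
        using x x_eq R_carrier_path[OF f, of "left_factor i r"]
          R_carrier_path[OF g, of "right_factor t i r"] pconcat_factors[of i r t] by auto
      then show "?F x = 0"
        using R_twisted_zero[OF f, of "fst r" "take i (snd r)"] x_eq by (auto simp: left_factor_def)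
    qed
  qed simp
  also have "\<dots> = (\<Sum>i\<le>length (snd r). ?F (?factorization i))"
    by (simp add: sum.reindex[OF inj_on_factorization])
  finally show ?thesis
    by simp
qed

lemma R_mult_closed:
  assumes f: "f \<in> carrier R" and g: "g \<in> carrier R"
  shows "f \<otimes>\<^bsub>R\<^esub> g \<in> carrier R"
proof -
  have factorization: "\<exists>p q. path p \<and> path q \<and> f p \<noteq> 0 \<and> g q \<noteq> 0 \<and> ptail t p = fst q \<and> pconcat p q = r"
    if "(f \<otimes>\<^bsub>R\<^esub> g) r \<noteq> 0" for r
  proof (rule ccontr)
    assume "\<not> ?thesis"
    then have "{(p, q). path p \<and> path q \<and> f p \<noteq> 0 \<and> g q \<noteq> 0 \<and> ptail t p = fst q \<and> pconcat p q = r} = {}"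
      by blast
    with that show False
      by (simp only: R_mult) simp
  qed
  have "{r. (f \<otimes>\<^bsub>R\<^esub> g) r \<noteq> 0} \<subseteq> (\<lambda>(p, q). pconcat p q) ` ({p. f p \<noteq> 0} \<times> {q. g q \<noteq> 0})"
  proof
    fix r assume "r \<in> {r. (f \<otimes>\<^bsub>R\<^esub> g) r \<noteq> 0}"
    then obtain p q where "f p \<noteq> 0" and "g q \<noteq> 0" and "pconcat p q = r"
      using factorization by blast
    then show "r \<in> (\<lambda>(p, q). pconcat p q) ` ({p. f p \<noteq> 0} \<times> {q. g q \<noteq> 0})"
      by (intro image_eqI[of _ _ "(p, q)"]) auto
  qed
  then have "finite {r. (f \<otimes>\<^bsub>R\<^esub> g) r \<noteq> 0}"
    using R_carrier_finite_support[OF f] R_carrier_finite_support[OF g] finite_subset by blast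
  moreover have "path r" if "(f \<otimes>\<^bsub>R\<^esub> g) r \<noteq> 0" for r
    using factorization[OF that] path_pconcat by blast
  ultimately show ?thesis
    unfolding R_carrier_iff by blast
qed

lemma scalar_elem_carrier: "scalar_elem V c \<in> carrier R"
proof -
  have "{p. scalar_elem V c p \<noteq> 0} \<subseteq> V \<times> {[]}"
    by (auto simp: scalar_elem_def split: if_splits)
  then have "finite {p. scalar_elem V c p \<noteq> 0}"
    using finite_V finite_subset by blast
  moreover have "path p" if "scalar_elem V c p \<noteq> 0" for p
    using that by (cases p) (auto simp: scalar_elem_def split: if_splits)
  ultimately show ?thesis
    unfolding R_carrier_iff by blast
qed

lemma R_one_closed: "\<one>\<^bsub>R\<^esub> \<in> carrier R"
  by (simp add: R_one scalar_elem_carrier)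

lemma R_zero_closed: "\<zero>\<^bsub>R\<^esub> \<in> carrier R"
  by (simp add: R_carrier_iff R_zero)

lemma R_add_closed:
  assumes f: "f \<in> carrier R" and g: "g \<in> carrier R"
  shows "f \<oplus>\<^bsub>R\<^esub> g \<in> carrier R"
proof -
  have "{p. (f \<oplus>\<^bsub>R\<^esub> g) p \<noteq> 0} \<subseteq> {p. f p \<noteq> 0} \<union> {p. g p \<noteq> 0}"
    by (auto simp: R_add)
  then show ?thesis
    using f g finite_subset by (fastforce simp: R_carrier_iff R_add)
qed

lemma R_uminus_closed: "f \<in> carrier R \<Longrightarrow> (\<lambda>p. - f p) \<in> carrier R"
  by (simp add: R_carrier_iff)

lemma scalar_elem_mult:
  assumes f: "f \<in> carrier R"
  shows "scalar_elem V c \<otimes>\<^bsub>R\<^esub> f = (\<lambda>p. c * f p)"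
proof
  fix r
  have "f r \<noteq> 0 \<Longrightarrow> fst r \<in> V"
    using R_carrier_path[OF f] path_head_in_V by (cases r) auto
  then have "(scalar_elem V c \<otimes>\<^bsub>R\<^esub> f) r = (\<Sum>i\<le>length (snd r). if i = 0 then c * f r else 0)"
    unfolding R_mult_eq_factor_sum[OF scalar_elem_carrier f]
    by (intro sum.cong) (auto simp: scalar_elem_def left_factor_def right_factor_def)
  then show "(scalar_elem V c \<otimes>\<^bsub>R\<^esub> f) r = c * f r"
    by simp
qed

lemma R_one_left: "f \<in> carrier R \<Longrightarrow> \<one>\<^bsub>R\<^esub> \<otimes>\<^bsub>R\<^esub> f = f"
  by (simp add: R_one scalar_elem_mult)

lemma R_one_right:
  assumes f: "f \<in> carrier R"
  shows "f \<otimes>\<^bsub>R\<^esub> \<one>\<^bsub>R\<^esub> = f"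
proof
  fix r
  have "f r * ptwist \<sigma> (snd r) (if ptail t r \<in> V then 1 else 0) = f r"
    using R_carrier_path[OF f, of r] path_ptail_in_V[of r] ring_endomorphism_path_twist[of r]
      ring_endomorphism_one by (cases "f r = 0") auto
  then have "(f \<otimes>\<^bsub>R\<^esub> \<one>\<^bsub>R\<^esub>) r = (\<Sum>i\<le>length (snd r). if i = length (snd r) then f r else 0)"
    unfolding R_mult_eq_factor_sum[OF f R_one_closed]
    by (intro sum.cong) (auto simp: R_one scalar_elem_def left_factor_def right_factor_def
        R_twisted_zero[OF f])
  then show "(f \<otimes>\<^bsub>R\<^esub> \<one>\<^bsub>R\<^esub>) r = f r"
    by simp
qed

lemma R_distrib_right:
  assumes f: "f \<in> carrier R" and g: "g \<in> carrier R" and k: "k \<in> carrier R"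
  shows "(f \<oplus>\<^bsub>R\<^esub> g) \<otimes>\<^bsub>R\<^esub> k = f \<otimes>\<^bsub>R\<^esub> k \<oplus>\<^bsub>R\<^esub> g \<otimes>\<^bsub>R\<^esub> k"
  unfolding R_add[of "f \<otimes>\<^bsub>R\<^esub> k"] R_mult_eq_factor_sum[OF R_add_closed[OF f g] k]
    R_mult_eq_factor_sum[OF f k] R_mult_eq_factor_sum[OF g k]
  by (simp add: R_add sum.distrib distrib_right)

lemma R_distrib_left:
  assumes f: "f \<in> carrier R" and g: "g \<in> carrier R" and k: "k \<in> carrier R"
  shows "k \<otimes>\<^bsub>R\<^esub> (f \<oplus>\<^bsub>R\<^esub> g) = k \<otimes>\<^bsub>R\<^esub> f \<oplus>\<^bsub>R\<^esub> k \<otimes>\<^bsub>R\<^esub> g"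
proof -
  have "k p * ptwist \<sigma> (snd p) (x + y) = k p * ptwist \<sigma> (snd p) x + k p * ptwist \<sigma> (snd p) y"
    for p x y
  proof (cases "k p = 0")
    case False
    then show ?thesis
      using R_carrier_path[OF k False]
      by (simp add: ring_endomorphism_add ring_endomorphism_path_twist distrib_left)
  qed simp
  then show ?thesis
    unfolding R_add[of "k \<otimes>\<^bsub>R\<^esub> f"] R_mult_eq_factor_sum[OF k R_add_closed[OF f g]]
      R_mult_eq_factor_sum[OF k f] R_mult_eq_factor_sum[OF k g]
    by (simp add: R_add sum.distrib)
qed

lemma R_mult_mult_left:
  assumes f: "f \<in> carrier R" and g: "g \<in> carrier R" and k: "k \<in> carrier R"
  shows "((f \<otimes>\<^bsub>R\<^esub> g) \<otimes>\<^bsub>R\<^esub> k) r = (\<Sum>j\<le>length (snd r). \<Sum>i\<le>j. f (left_factor i r) *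
    (ptwist \<sigma> (snd (left_factor i r)) (g (left_factor (j - i) (right_factor t i r))) *
     ptwist \<sigma> (snd (left_factor j r)) (k (right_factor t j r))))"
  unfolding R_mult_eq_factor_sum[OF R_mult_closed[OF f g] k] R_mult_eq_factor_sum[OF f g]
  by (intro sum.cong) (simp_all add: length_left_factor left_factor_left_factor
      right_factor_left_factor sum_distrib_right mult.assoc)

lemma R_mult_mult_right:
  assumes f: "f \<in> carrier R" and g: "g \<in> carrier R" and k: "k \<in> carrier R"
  shows "(f \<otimes>\<^bsub>R\<^esub> (g \<otimes>\<^bsub>R\<^esub> k)) r = (\<Sum>i\<le>length (snd r). \<Sum>m\<le>length (snd r) - i. f (left_factor i r) *
    (ptwist \<sigma> (snd (left_factor i r)) (g (left_factor m (right_factor t i r))) *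
     ptwist \<sigma> (snd (left_factor (i + m) r)) (k (right_factor t (i + m) r))))"
  unfolding R_mult_eq_factor_sum[OF f R_mult_closed[OF g k]]
proof (rule sum.cong)
  fix i
  show "f (left_factor i r) * ptwist \<sigma> (snd (left_factor i r)) ((g \<otimes>\<^bsub>R\<^esub> k) (right_factor t i r)) =
    (\<Sum>m\<le>length (snd r) - i. f (left_factor i r) *
      (ptwist \<sigma> (snd (left_factor i r)) (g (left_factor m (right_factor t i r))) *
       ptwist \<sigma> (snd (left_factor (i + m) r)) (k (right_factor t (i + m) r))))"
  proof (cases "f (left_factor i r) = 0")
    case False
    then have "ring_endomorphism (ptwist \<sigma> (snd (left_factor i r)))"
      using R_carrier_path[OF f] ring_endomorphism_path_twist by blast
    then show ?thesis
      by (simp add: R_mult_eq_factor_sum[OF g k] ring_endomorphism_sum ring_endomorphism_mult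
          sum_distrib_left length_right_factor right_factor_right_factor ptwist_left_factor_right_factor)
  qed simp
qed simp

lemma R_mult_assoc:
  assumes f: "f \<in> carrier R" and g: "g \<in> carrier R" and k: "k \<in> carrier R"
  shows "(f \<otimes>\<^bsub>R\<^esub> g) \<otimes>\<^bsub>R\<^esub> k = f \<otimes>\<^bsub>R\<^esub> (g \<otimes>\<^bsub>R\<^esub> k)"
proof
  fix r :: "'v \<times> 'a list"
  define n where "n = length (snd r)"
  define G where "G i m = f (left_factor i r) *
    (ptwist \<sigma> (snd (left_factor i r)) (g (left_factor m (right_factor t i r))) *
     ptwist \<sigma> (snd (left_factor (i + m) r)) (k (right_factor t (i + m) r)))" for i m
  have "((f \<otimes>\<^bsub>R\<^esub> g) \<otimes>\<^bsub>R\<^esub> k) r = (\<Sum>j\<le>n. \<Sum>i\<le>j. G i (j - i))"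
    unfolding R_mult_mult_left[OF f g k] G_def n_def by (auto intro!: sum.cong)
  also have "\<dots> = (\<Sum>(i, m)\<in>{(i, m). i + m \<le> n}. G i m)"
    by (rule sum.triangle_reindex_eq[symmetric])
  also have "\<dots> = (\<Sum>i\<le>n. \<Sum>m\<le>n - i. G i m)"
    by (subst sum.Sigma) (auto intro!: sum.cong)
  also have "\<dots> = (f \<otimes>\<^bsub>R\<^esub> (g \<otimes>\<^bsub>R\<^esub> k)) r"
    unfolding R_mult_mult_right[OF f g k] G_def n_def ..
  finally show "((f \<otimes>\<^bsub>R\<^esub> g) \<otimes>\<^bsub>R\<^esub> k) r = (f \<otimes>\<^bsub>R\<^esub> (g \<otimes>\<^bsub>R\<^esub> k)) r" .
qed

lemma ring_R: "ring R"
proof (rule ringI)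
  show "abelian_group R"
  proof (rule abelian_groupI)
    fix f assume "f \<in> carrier R"
    then show "\<exists>g\<in>carrier R. g \<oplus>\<^bsub>R\<^esub> f = \<zero>\<^bsub>R\<^esub>"
      by (intro bexI[of _ "\<lambda>p. - f p"]) (auto simp: R_add R_zero R_uminus_closed)
  qed (use R_add_closed R_zero_closed in \<open>auto simp: R_add R_zero add.assoc add.commute\<close>)
  show "monoid R"
    by (rule monoidI) (auto simp: R_mult_closed R_one_closed R_mult_assoc R_one_left R_one_right)
qed (auto simp: R_distrib_left R_distrib_right)

lemma path_elem_carrier: "path p \<Longrightarrow> path_elem p \<in> carrier R"
  by (simp add: R_carrier_iff path_elem_def)

lemma path_elem_mult:
  assumes p: "path p" and q: "path q" and pq: "ptail t p = fst q"
  shows "path_elem p \<otimes>\<^bsub>R\<^esub> path_elem q = path_elem (pconcat p q)"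
proof
  fix r
  have "{(p', q'). path p' \<and> path q' \<and> path_elem p p' \<noteq> (0::'k) \<and> path_elem q q' \<noteq> (0::'k)
      \<and> ptail t p' = fst q' \<and> pconcat p' q' = r} = (if pconcat p q = r then {(p, q)} else {})"
    using p q pq by (auto simp: path_elem_def)
  moreover have "ptwist \<sigma> (snd p) 1 = 1"
    using p ring_endomorphism_path_twist ring_endomorphism_one by blast
  ultimately show "(path_elem p \<otimes>\<^bsub>R\<^esub> path_elem q) r = path_elem (pconcat p q) r"
    by (simp add: R_mult) (simp add: path_elem_def)
qed

lemma path_elem_mem_ideal_if_not_admissible:
  assumes J: "ideal J R" and relations: "relation_elems h Z \<subseteq> J"
    and p: "path p" and not_admissible: "\<not> admissible_path V A h t Z p"
  shows "path_elem p \<in> J"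
proof -
  interpret J: ideal J R by (rule J)
  obtain v as where p_eq: "p = (v, as)"
    by (cases p)
  have "\<not> successively (\<lambda>b a. (b, a) \<notin> Z) as"
    using p not_admissible by (simp add: p_eq admissible_path_def successively_conv_nth)
  then obtain xs b a ys where as: "as = xs @ [b, a] @ ys" and relation: "(b, a) \<in> Z"
    using not_successively_split by fastforce
  define u where "u = ptail t (v, xs @ [b, a])"
  have prefix: "path (v, xs @ [b, a])" and suffix: "path (u, ys)"
    using p path_append[of v "xs @ [b, a]" ys] by (simp_all add: p_eq as u_def)
  then have paths: "path (v, xs)" "path (h b, [b, a])" and "ptail t (v, xs) = h b"
    using path_append[of v xs "[b, a]"] by auto
  then have "path_elem (v, xs) \<otimes>\<^bsub>R\<^esub> path_elem (h b, [b, a]) = path_elem (v, xs @ [b, a])"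
    by (simp add: path_elem_mult pconcat_def)
  moreover have "path_elem (v, xs @ [b, a]) \<otimes>\<^bsub>R\<^esub> path_elem (u, ys) = path_elem p"
    using prefix suffix by (simp add: path_elem_mult pconcat_def p_eq as u_def)
  moreover have "path_elem (h b, [b, a]) \<in> J"
    using relations relation by (auto simp: relation_elems_def)
  ultimately show ?thesis
    using paths suffix by (metis J.I_l_closed J.I_r_closed path_elem_carrier)
qed

lemma R_fun_upd_zero_closed:
  assumes f: "f \<in> carrier R"
  shows "f(q := 0) \<in> carrier R"
proof -
  have "{p. (f(q := 0)) p \<noteq> 0} \<subseteq> {p. f p \<noteq> 0}"
    by auto
  then show ?thesis
    using f R_carrier_finite_support finite_subset R_carrier_path
    unfolding R_carrier_iff[of "f(q := 0)"] by (metis fun_upd_apply)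
qed

lemma R_split_coefficient:
  assumes "path q"
  shows "f = f(q := 0) \<oplus>\<^bsub>R\<^esub> scalar_elem V (f q) \<otimes>\<^bsub>R\<^esub> path_elem q"
  using scalar_elem_mult[OF path_elem_carrier[OF assms]] by (auto simp: R_add path_elem_def)

lemma mem_ideal_if_vanishes_on_admissible:
  assumes J: "ideal J R" and relations: "relation_elems h Z \<subseteq> J"
    and f: "f \<in> carrier R" and vanishes: "\<forall>p. admissible_path V A h t Z p \<longrightarrow> f p = 0"
  shows "f \<in> J"
proof -
  interpret J: ideal J R by (rule J)
  have "f \<in> J" if "finite S" "f \<in> carrier R" "{p. f p \<noteq> 0} \<subseteq> S"
      "\<forall>p. admissible_path V A h t Z p \<longrightarrow> f p = 0" for S f
    using that
  proof (induction S arbitrary: f rule: finite_induct)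
    case empty
    then have "f = \<zero>\<^bsub>R\<^esub>"
      by (auto simp: R_zero)
    then show ?case
      by simp
  next
    case (insert q S)
    have "{p. (f(q := 0)) p \<noteq> 0} \<subseteq> S"
      using insert.prems(2) by auto
    moreover have "\<forall>p. admissible_path V A h t Z p \<longrightarrow> (f(q := 0)) p = 0"
      using insert.prems(3) by simp
    ultimately have rest: "f(q := 0) \<in> J"
      using insert.IH R_fun_upd_zero_closed[OF insert.prems(1)] by blast
    show ?case
    proof (cases "f q = 0")
      case True
      then show ?thesis
        using rest by (simp add: fun_upd_idem)
    next
      case False
      then have q: "path q" "\<not> admissible_path V A h t Z q"
        using insert.prems(1,3) R_carrier_path by blast+
      then have "scalar_elem V (f q) \<otimes>\<^bsub>R\<^esub> path_elem q \<in> J"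
        using path_elem_mem_ideal_if_not_admissible[OF J relations] J.I_l_closed scalar_elem_carrier
        by blast
      then show ?thesis
        using R_split_coefficient[OF q(1), of f] rest
          additive_subgroup.a_closed[OF J.additive_subgroup_axioms] by metis
    qed
  qed
  then show ?thesis
    using R_carrier_finite_support[OF f] f vanishes by blast
qed

end

section \<open>The excision homomorphism\<close>

fun uncut :: "'v cut_vertex \<Rightarrow> 'v" where
  "uncut (Plain v) = v"
| "uncut (Sharp v) = v"
| "uncut (Flat v) = v"

definition uncut_path :: "'v cut_vertex \<times> 'a list \<Rightarrow> 'v \<times> 'a list" where
  "uncut_path p = (uncut (fst p), snd p)"

lemma uncut_path_left_factor: "uncut_path (left_factor i p) = left_factor i (uncut_path p)"
  by (simp add: uncut_path_def left_factor_def)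

locale excision = semilinear_quiver V A h t \<sigma>
  for V :: "'v set" and A :: "'a set" and h t :: "'a \<Rightarrow> 'v"
    and \<sigma> :: "'a \<Rightarrow> 'k::division_ring \<Rightarrow> 'k" +
  fixes Z :: "('a \<times> 'a) set" and h' t' :: "'a \<Rightarrow> 'v cut_vertex"
  assumes relations_composable: "Z \<subseteq> {(b, a). a \<in> A \<and> b \<in> A \<and> h a = t b}"
    and reattachment: "is_cut_reattachment A h t Z h' t'"
begin

abbreviation V' :: "'v cut_vertex set" where
  "V' \<equiv> cut_vertices V h t Z"

lemma uncut_head': "a \<in> A \<Longrightarrow> uncut (h' a) = h a"
  using reattachment unfolding is_cut_reattachment_def by (auto split: if_splits)

lemma uncut_tail': "a \<in> A \<Longrightarrow> uncut (t' a) = t a"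
  using reattachment unfolding is_cut_reattachment_def by (auto split: if_splits)

lemma arrow_ends'_in_V': "a \<in> A \<Longrightarrow> h' a \<in> V' \<and> t' a \<in> V'"
  using reattachment arrow_ends_in_V unfolding is_cut_reattachment_def cut_vertices_def
  by (auto split: if_splits)

lemma uncut_in_V: "w \<in> V' \<Longrightarrow> uncut w \<in> V"
  unfolding cut_vertices_def by auto

lemma ex_cut_vertex_over: "v \<in> V \<Longrightarrow> \<exists>w\<in>V'. uncut w = v"
  unfolding cut_vertices_def by (cases "relational h t Z v") force+

lemma finite_V': "finite V'"
  unfolding cut_vertices_def using finite_V by auto

sublocale cut: semilinear_quiver V' A h' t' \<sigma>
  using arrow_ends'_in_V' finite_V' automorphic_twists by unfold_locales auto

lemma cut_consecutive_iff:
  assumes a: "a \<in> A" and b: "b \<in> A"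
  shows "t' b = h' a \<longleftrightarrow> t b = h a \<and> (b, a) \<notin> Z"
proof (cases "relational h t Z (h a)")
  case True
  then show ?thesis
    using reattachment a b uncut_head' uncut_tail' unfolding is_cut_reattachment_def by metis
next
  case False
  then have "(b, a) \<notin> Z"
    using relations_composable unfolding relational_def by fastforce
  moreover have "h' a = Plain (h a)" and "t b = h a \<Longrightarrow> t' b = Plain (t b)"
    using reattachment a b False unfolding is_cut_reattachment_def by auto
  ultimately show ?thesis
    using b uncut_tail' by force
qed

lemma cut_path_iff:
  "cut.path (w, as) \<longleftrightarrow>
     admissible_path V A h t Z (uncut w, as) \<and> (if as = [] then w \<in> V' else w = h' (hd as))"
proof -
  have "successively (\<lambda>b a. t' b = h' a) as \<longleftrightarrow> successively (\<lambda>b a. t b = h a \<and> (b, a) \<notin> Z) as"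
    if "set as \<subseteq> A"
    using that cut_consecutive_iff by (intro successively_cong) auto
  then show ?thesis
    by (cases as) (auto simp: qpath_iff admissible_path_iff uncut_in_V uncut_head')
qed

lemma uncut_ptail: "cut.path p \<Longrightarrow> uncut (ptail t' p) = ptail t (uncut_path p)"
  by (cases p) (auto simp: ptail_def qpath_iff uncut_path_def intro!: uncut_tail' dest!: last_in_set)

lemma uncut_path_right_factor:
  "cut.path p \<Longrightarrow> uncut_path (right_factor t' i p) = right_factor t i (uncut_path p)"
  using uncut_ptail[OF cut.path_left_factor, of p i]
  by (simp add: right_factor_def uncut_path_left_factor, simp add: uncut_path_def)

text \<open>
  On basis elements this is the map of the statement: e_v goes to e_v' or to
  e_v(sharp) + e_v(flat), and a nontrivial path goes to its unique lift to Q' if it is admissible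
  and to 0 otherwise.
\<close>

definition excision_map :: "('v \<times> 'a list \<Rightarrow> 'k) \<Rightarrow> ('v cut_vertex \<times> 'a list \<Rightarrow> 'k)" where
  "excision_map f p = (if cut.path p then f (uncut_path p) else 0)"

lemma excision_map_carrier:
  assumes f: "f \<in> carrier R"
  shows "excision_map f \<in> carrier cut.R"
proof -
  have "{p. excision_map f p \<noteq> 0} \<subseteq>
      (\<lambda>(c, p). (c (fst p), snd p)) ` ({Plain, Sharp, Flat} \<times> {p. f p \<noteq> 0})"
  proof
    fix p assume "p \<in> {p. excision_map f p \<noteq> 0}"
    then have "f (uncut_path p) \<noteq> 0"
      by (simp add: excision_map_def split: if_splits)
    moreover obtain c where "c \<in> {Plain, Sharp, Flat}" and "fst p = c (uncut (fst p))"
      by (cases "fst p") auto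
    ultimately show "p \<in> (\<lambda>(c, p). (c (fst p), snd p)) ` ({Plain, Sharp, Flat} \<times> {p. f p \<noteq> 0})"
      by (intro image_eqI[of _ _ "(c, uncut_path p)"]) (auto simp: uncut_path_def)
  qed
  then have "finite {p. excision_map f p \<noteq> 0}"
    using R_carrier_finite_support[OF f] finite_subset by blast
  moreover have "cut.path p" if "excision_map f p \<noteq> 0" for p
    using that by (simp add: excision_map_def split: if_splits)
  ultimately show ?thesis
    unfolding cut.R_carrier_iff by blast
qed

lemma excision_map_add: "excision_map (f \<oplus>\<^bsub>R\<^esub> g) = excision_map f \<oplus>\<^bsub>cut.R\<^esub> excision_map g"
  by (auto simp: excision_map_def R_add cut.R_add)

lemma excision_map_scalar_elem: "excision_map (scalar_elem V c) = scalar_elem V' c"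
  by (auto simp: excision_map_def scalar_elem_def uncut_path_def uncut_in_V)

lemma excision_map_mult:
  assumes f: "f \<in> carrier R" and g: "g \<in> carrier R"
  shows "excision_map (f \<otimes>\<^bsub>R\<^esub> g) = excision_map f \<otimes>\<^bsub>cut.R\<^esub> excision_map g"
proof
  fix p
  show "excision_map (f \<otimes>\<^bsub>R\<^esub> g) p = (excision_map f \<otimes>\<^bsub>cut.R\<^esub> excision_map g) p"
  proof (cases "cut.path p")
    case True
    then show ?thesis
      unfolding cut.R_mult_eq_factor_sum[OF excision_map_carrier[OF f] excision_map_carrier[OF g]]
      by (simp add: excision_map_def R_mult_eq_factor_sum[OF f g] cut.path_left_factor
          cut.path_right_factor uncut_path_left_factor uncut_path_right_factor)
        (simp add: uncut_path_def left_factor_def)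
  next
    case False
    then show ?thesis
      using cut.R_mult_closed[OF excision_map_carrier[OF f] excision_map_carrier[OF g]]
      by (metis cut.R_carrier_path excision_map_def)
  qed
qed

lemma ring_hom_ring_excision_map: "ring_hom_ring R cut.R excision_map"
  by (rule ring_hom_ringI[OF ring_R cut.ring_R])
    (simp_all add: excision_map_carrier excision_map_mult excision_map_add R_one cut.R_one
      excision_map_scalar_elem)

lemma ex_cut_path_over_admissible:
  assumes "admissible_path V A h t Z (v, as)"
  shows "\<exists>w. uncut w = v \<and> cut.path (w, as)"
proof (cases as)
  case Nil
  then obtain w where "w \<in> V'" and "uncut w = v"
    using assms ex_cut_vertex_over by (auto simp: admissible_path_iff)
  then show ?thesis
    using Nil by auto
next
  case (Cons a as')
  then have "a \<in> A" and "v = h a"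
    using assms by (auto simp: admissible_path_iff)
  then have "uncut (h' a) = v"
    by (simp add: uncut_head')
  moreover have "cut.path (h' a, as)"
    using assms Cons calculation cut_path_iff[of "h' a" as] by simp
  ultimately show ?thesis
    by blast
qed

lemma excision_map_eq_zero_iff:
  assumes f: "f \<in> carrier R"
  shows "excision_map f = \<zero>\<^bsub>cut.R\<^esub> \<longleftrightarrow> (\<forall>p. admissible_path V A h t Z p \<longrightarrow> f p = 0)"
proof
  assume zero: "excision_map f = \<zero>\<^bsub>cut.R\<^esub>"
  show "\<forall>p. admissible_path V A h t Z p \<longrightarrow> f p = 0"
  proof (intro allI impI)
    fix p assume "admissible_path V A h t Z p"
    then obtain w where "uncut w = fst p" and "cut.path (w, snd p)"
      using ex_cut_path_over_admissible[of "fst p" "snd p"] by auto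
    then have "excision_map f (w, snd p) = f p"
      by (simp add: excision_map_def uncut_path_def)
    with zero show "f p = 0"
      by (simp add: cut.R_zero)
  qed
next
  assume "\<forall>p. admissible_path V A h t Z p \<longrightarrow> f p = 0"
  then show "excision_map f = \<zero>\<^bsub>cut.R\<^esub>"
    using cut_path_iff by (auto simp: excision_map_def cut.R_zero uncut_path_def)
qed

lemma a_kernel_excision_map: "a_kernel R cut.R excision_map = genideal R (relation_elems h Z)"
proof
  have relations_carrier: "relation_elems h Z \<subseteq> carrier R"
    using relations_composable arrow_ends_in_V
    by (auto simp: relation_elems_def intro!: path_elem_carrier)
  then have ideal: "ideal (genideal R (relation_elems h Z)) R"
    by (rule ring.genideal_ideal[OF ring_R])
  show "a_kernel R cut.R excision_map \<subseteq> genideal R (relation_elems h Z)"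
    using mem_ideal_if_vanishes_on_admissible[OF ideal ring.genideal_self[OF ring_R relations_carrier]]
    by (auto simp: a_kernel_def' excision_map_eq_zero_iff)
  have "relation_elems h Z \<subseteq> a_kernel R cut.R excision_map"
  proof
    fix x :: "'v \<times> 'a list \<Rightarrow> 'k"
    assume x: "x \<in> relation_elems h Z"
    then obtain b a where "(b, a) \<in> Z" and "x = path_elem (h b, [b, a])"
      by (auto simp: relation_elems_def)
    then have "\<forall>p. admissible_path V A h t Z p \<longrightarrow> x p = 0"
      by (auto simp: path_elem_def admissible_path_iff)
    then show "x \<in> a_kernel R cut.R excision_map"
      using x relations_carrier by (auto simp: a_kernel_def' excision_map_eq_zero_iff)
  qed
  then show "genideal R (relation_elems h Z) \<subseteq> a_kernel R cut.R excision_map"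
    using ring.genideal_minimal[OF ring_R ring_hom_ring.kernel_is_ideal[OF ring_hom_ring_excision_map]]
    by blast
qed

lemma ex_embedding_bound_algebra:
  "\<exists>\<Delta>. \<Delta> \<in> ring_hom (bound_semilinear_algebra V A h t \<sigma> Z) cut.R
      \<and> inj_on \<Delta> (carrier (bound_semilinear_algebra V A h t \<sigma> Z))
      \<and> (\<forall>c. \<Delta> (bound_scalar V A h t \<sigma> Z c) = scalar_elem V' c)"
proof -
  let ?\<Delta> = "\<lambda>X. the_elem (excision_map ` X)"
  note hom = ring_hom_ring_excision_map
  have ring_hom: "?\<Delta> \<in> ring_hom (R Quot a_kernel R cut.R excision_map) cut.R"
    by (rule ring_hom_ring.the_elem_hom[OF hom])
  have inj: "inj_on ?\<Delta> (carrier (R Quot a_kernel R cut.R excision_map))"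
    by (rule inj_onI) (rule ring_hom_ring.the_elem_inj[OF hom])
  have scalar: "?\<Delta> (a_kernel R cut.R excision_map +>\<^bsub>R\<^esub> scalar_elem V c) = scalar_elem V' c" for c
    using ring_hom_ring.the_elem_simp[OF hom scalar_elem_carrier] excision_map_scalar_elem by simp
  show ?thesis
    unfolding bound_semilinear_algebra_def bound_scalar_def a_kernel_excision_map[symmetric]
    by (intro exI[of _ ?\<Delta>] conjI allI ring_hom inj scalar)
qed

end

lemma finite_vertices_if_finite_admissible:
  assumes "finite {p. admissible_path V A h t Z p}"
  shows "finite V"
proof -
  have "(\<lambda>v. (v, [])) ` V \<subseteq> {p. admissible_path V A h t Z p}"
    by (auto simp: admissible_path_def qpath_def)
  moreover have "inj_on (\<lambda>v. (v, [])) V"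
    by (rule inj_onI) simp
  ultimately show ?thesis
    using assms by (metis finite_imageD finite_subset)
qed

theorem lemma5p21:
  fixes V :: "'v set" and A :: "'a set" and h t :: "'a \<Rightarrow> 'v"
    and Z :: "('a \<times> 'a) set" and \<sigma> :: "'a \<Rightarrow> 'k::division_ring \<Rightarrow> 'k"
    and h' t' :: "'a \<Rightarrow> 'v cut_vertex"
  assumes "gentle_pair V A h t Z"
    and "\<forall>a\<in>A. ring_automorphism (\<sigma> a)"
    and "is_cut_reattachment A h t Z h' t'"
  shows "\<exists>\<Delta>. \<Delta> \<in> ring_hom (bound_semilinear_algebra V A h t \<sigma> Z)
                        (semilinear_path_algebra (cut_vertices V h t Z) A h' t' \<sigma>)
          \<and> inj_on \<Delta> (carrier (bound_semilinear_algebra V A h t \<sigma> Z))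
          \<and> (\<forall>c::'k. \<Delta> (bound_scalar V A h t \<sigma> Z c) = scalar_elem (cut_vertices V h t Z) c)"
proof -
  have "locally_gentle V A h t Z" and "finite V"
    using assms(1) finite_vertices_if_finite_admissible by (auto simp: gentle_pair_def)
  then interpret excision V A h t \<sigma> Z h' t'
    using assms(2,3) by unfold_locales (simp_all add: locally_gentle_def)
  show ?thesis
    by (rule ex_embedding_bound_algebra)
qed

end
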